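(* Let $P_{XY}$ be a probability measure on $\mathcal X\times\mathcal Y$ with $|\mathcal X|=M$. Let $L<M$ be a fixed positive integer and $\mathcal L:\mathcal Y\to\binom{\mathcal X}{L}$ a decision rule (mapping each $y$ to a subset of $\mathcal X$ of cardinality $L$), with list decoding error probability $P_{\mathcal L}:=\mathbb P[X\notin\mathcal L(Y)]$. Then for every convex $f:(0,\infty)\to\mathbb R$ with $f(1)=0$, $$\mathbb E\big[D_f(P_{X|Y}(\cdot|Y)\|U_M)\big]\ge\frac LMf\Big(\frac{M(1-P_{\mathcal L})}{L}\Big)+\Big(1-\frac LM\Big)f\Big(\frac{MP_{\mathcal L}}{M-L}\Big).$$
   Context: $U_M$ is the uniform distribution on $\mathcal X$; $D_f(P\|Q)=\sum_xQ(x)f(P(x)/Q(x))$ with $f(0):=\lim_{t\to0^+}f(t)$. *)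

theory Defs
  imports "HOL-Probability.Probability"
begin

text \<open>Extension of f to 0 by its right limit f(0) := lim_{t -> 0+} f(t),
  taken in the extended reals (the limit may be +infinity).\<close>
definition fext :: "(real \<Rightarrow> real) \<Rightarrow> real \<Rightarrow> ereal" where
  "fext f t = (if t = 0 then Lim (at_right 0) (\<lambda>s. ereal (f s)) else ereal (f t))"

definition fdiv :: "(real \<Rightarrow> real) \<Rightarrow> 'a::finite pmf \<Rightarrow> 'a pmf \<Rightarrow> ereal" where
  "fdiv f P Q = (\<Sum>x\<in>UNIV. ereal (pmf Q x) * fext f (pmf P x / pmf Q x))"

definition unif :: "'a::finite pmf" where
  "unif = pmf_of_set UNIV"

end

theory Submission
  imports Defs
begin

text \<open>For a single conditional distribution, split the sum defining
  \<open>D\<^sub>f(P\<^sub>X\<^sub>|\<^sub>Y(\<cdot>|y) \<parallel> U\<^sub>M)\<close> into the \<open>L\<close> letters of the list and the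
  \<open>M - L\<close> others. On each part, a supporting line of \<open>f\<close> at the point where the
  right-hand side evaluates \<open>f\<close> bounds the part from below by an affine function of
  the conditional list error \<open>e(y) = P[X \<notin> \<L>(y) | Y = y]\<close>: Jensen's inequality in
  linearised form. The sum of the two affine bounds has expectation exactly the
  right-hand side, since \<open>E e(Y) = P\<^sub>L\<close>. If \<open>P\<^sub>L\<close> is 0 or 1, one of the two points
  is 0, where \<open>f\<close> may have no supporting line; but then \<open>e(Y)\<close> is almost surely
  0 resp. 1 and the corresponding part is constant.\<close>

lemma convex_on_supporting_line:
  fixes f :: "real \<Rightarrow> real"
  assumes convex: "convex_on {0<..} f" and "0 < c"
  obtains s where "\<And>t. 0 < t \<Longrightarrow> f c + s * (t - c) \<le> f t"
proof -
  define slope where "slope t = (f c - f t) / (c - t)" for t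
  have slope_le: "slope t \<le> slope u" if "0 < t" "t < c" "c < u" for t u
  proof -
    have "(f t - f c) / (t - c) \<le> (f t - f u) / (t - u)"
         "(f t - f u) / (t - u) \<le> (f c - f u) / (c - u)"
      using convex_on_slope_le[OF convex, of t u c] that by auto
    then show ?thesis
      unfolding slope_def by (metis minus_diff_eq minus_divide_divide order_trans)
  qed
  define s where "s = (SUP t\<in>{0<..<c}. slope t)"
  have bdd: "bdd_above (slope ` {0<..<c})"
    using slope_le[of _ "c + 1"] by (intro bdd_aboveI2[of _ _ "slope (c + 1)"]) auto
  have "f c + s * (t - c) \<le> f t" if "0 < t" for t
  proof (cases t c rule: linorder_cases)
    case less
    have "slope t \<le> s"
      unfolding s_def by (rule cSUP_upper[OF _ bdd]) (use that less in auto)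
    then show ?thesis using less by (simp add: slope_def divide_le_eq algebra_simps)
  next
    case greater
    have "s \<le> slope t"
      unfolding s_def using \<open>0 < c\<close> greater by (intro cSUP_least) (auto intro: slope_le)
    then show ?thesis using greater by (simp add: slope_def le_divide_eq algebra_simps)
  qed simp
  then show thesis by (rule that)
qed

lemma tendsto_at_right_SUP_ereal:
  fixes g :: "real \<Rightarrow> ereal"
  assumes "a < b" and antimono: "\<And>t u. a < t \<Longrightarrow> t \<le> u \<Longrightarrow> u < b \<Longrightarrow> g u \<le> g t"
  shows "(g \<longlongrightarrow> (SUP t\<in>{a<..<b}. g t)) (at_right a)"
proof (rule order_tendstoI)
  fix l assume "l < (SUP t\<in>{a<..<b}. g t)"
  then obtain t0 where t0: "a < t0" "t0 < b" "l < g t0" by (auto simp: less_SUP_iff)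
  show "\<forall>\<^sub>F t in at_right a. l < g t"
    unfolding eventually_at_right_field
    using t0 antimono by (intro exI[of _ t0]) (auto intro: less_le_trans)
next
  fix l assume sup_less: "(SUP t\<in>{a<..<b}. g t) < l"
  have "g t < l" if "a < t" "t < b" for t
    using SUP_upper[of t "{a<..<b}" g] that sup_less by simp
  then show "\<forall>\<^sub>F t in at_right a. g t < l"
    unfolding eventually_at_right_field using \<open>a < b\<close> by blast
qed

lemma convex_on_tendsto_fext_0:
  fixes f :: "real \<Rightarrow> real"
  assumes convex: "convex_on {0<..} f"
  shows "((\<lambda>t. ereal (f t)) \<longlongrightarrow> fext f 0) (at_right 0)"
proof -
  obtain s where s: "\<And>t. 0 < t \<Longrightarrow> f 1 + s * (t - 1) \<le> f t"
    using convex_on_supporting_line[OF convex, of 1] by auto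
  \<comment> \<open>Tilting f by its slope at 1 makes it nonincreasing on (0, 1).\<close>
  have tilted_antimono: "f u - s * u \<le> f t - s * t" if "0 < t" "t \<le> u" "u < 1" for t u
  proof (cases "t = u")
    case False
    then have "(f t - f u) / (t - u) \<le> (f t - f 1) / (t - 1)"
      using convex_on_slope_le(1)[OF convex, of t 1 u] that by auto
    also have "\<dots> \<le> s"
      using s[of t] that by (simp add: divide_le_eq algebra_simps)
    finally show ?thesis using False that by (simp add: divide_le_eq algebra_simps)
  qed simp
  have tilted: "((\<lambda>t. ereal (f t - s * t)) \<longlongrightarrow> (SUP t\<in>{0<..<1}. ereal (f t - s * t))) (at_right 0)"
    using tilted_antimono by (intro tendsto_at_right_SUP_ereal) auto
  have linear: "((\<lambda>t. ereal (s * t)) \<longlongrightarrow> ereal 0) (at_right 0)"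
    by (intro tendsto_ereal tendsto_mult_right_zero tendsto_ident_at)
  have "((\<lambda>t. ereal (f t - s * t) + ereal (s * t))
      \<longlongrightarrow> (SUP t\<in>{0<..<1}. ereal (f t - s * t)) + ereal 0) (at_right 0)"
    by (rule tendsto_add_ereal_general1[OF _ tilted linear]) simp
  then have "((\<lambda>t. ereal (f t)) \<longlongrightarrow> (SUP t\<in>{0<..<1}. ereal (f t - s * t))) (at_right 0)"
    by simp
  then show ?thesis
    unfolding fext_def by (simp add: tendsto_Lim)
qed

lemma fext_ge_supporting_line:
  fixes f :: "real \<Rightarrow> real"
  assumes convex: "convex_on {0<..} f"
    and line: "\<And>t. 0 < t \<Longrightarrow> f c + s * (t - c) \<le> f t" and "0 \<le> t"
  shows "ereal (f c + s * (t - c)) \<le> fext f t"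
proof (cases "t = 0")
  case True
  have lim: "((\<lambda>t. ereal (f c + s * (t - c))) \<longlongrightarrow> ereal (f c + s * (0 - c))) (at_right 0)"
    by (intro tendsto_ereal tendsto_intros)
  have below: "\<forall>\<^sub>F t in at_right 0. ereal (f c + s * (t - c)) \<le> ereal (f t)"
    unfolding eventually_at_right_field using line by (intro exI[of _ 1]) auto
  have "ereal (f c + s * (0 - c)) \<le> fext f 0"
    by (rule tendsto_le[OF _ convex_on_tendsto_fext_0[OF convex] lim below]) simp
  then show ?thesis using True by simp
qed (use line \<open>0 \<le> t\<close> in \<open>simp add: fext_def\<close>)

lemma sum_ereal_mult_const:
  assumes "finite A" "0 \<le> r"
  shows "(\<Sum>x\<in>A. ereal r * X) = ereal (real (card A) * r) * X"
  using assms(1)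
proof (induction A rule: finite_induct)
  case (insert a A)
  have "(\<Sum>x\<in>insert a A. ereal r * X) = ereal r * X + ereal (real (card A) * r) * X"
    using insert by simp
  also have "\<dots> = (ereal r + ereal (real (card A) * r)) * X"
    by (rule ereal_left_distrib[symmetric]) (use \<open>0 \<le> r\<close> in auto)
  also have "ereal r + ereal (real (card A) * r) = ereal (real (card (insert a A)) * r)"
    using insert by (simp add: algebra_simps)
  finally show ?case .
qed simp

lemma sum_fext_ge_supporting_line:
  fixes f :: "real \<Rightarrow> real" and n :: nat and M r :: real
  assumes convex: "convex_on {0<..} f" and "0 < n" "0 < M" "0 \<le> r"
  obtains s where "\<And>S p. card S = n \<Longrightarrow> (\<And>x. x \<in> S \<Longrightarrow> 0 \<le> p x) \<Longrightarrow>
      (r = 0 \<Longrightarrow> sum p S = 0) \<Longrightarrow>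
      ereal (n / M) * fext f (M * r / n) + ereal (s * (sum p S - r))
        \<le> (\<Sum>x\<in>S. ereal (1 / M) * fext f (M * p x))"
proof (cases "r = 0")
  case True
  have "ereal (n / M) * fext f (M * r / n) + ereal (0 * (sum p S - r))
      \<le> (\<Sum>x\<in>S. ereal (1 / M) * fext f (M * p x))"
    if card: "card S = n" and nonneg: "\<And>x. x \<in> S \<Longrightarrow> 0 \<le> p x" and "sum p S = 0" for S p
  proof -
    have "finite S" using card \<open>0 < n\<close> card_gt_0_iff by blast
    then have "p x = 0" if "x \<in> S" for x
      using sum_nonneg_eq_0_iff[of S p] \<open>sum p S = 0\<close> \<open>x \<in> S\<close> nonneg by blast
    then have "(\<Sum>x\<in>S. ereal (1 / M) * fext f (M * p x)) = (\<Sum>x\<in>S. ereal (1 / M) * fext f 0)"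
      by simp
    also have "\<dots> = ereal (n / M) * fext f 0"
      using sum_ereal_mult_const[OF \<open>finite S\<close>, of "1 / M"] card \<open>0 < M\<close> by simp
    finally show ?thesis using True by simp
  qed
  then show thesis using True by (intro that) auto
next
  case False
  define c where "c = M * r / n"
  have "0 < c" using False assms by (simp add: c_def)
  then obtain s where line: "\<And>t. 0 < t \<Longrightarrow> f c + s * (t - c) \<le> f t"
    using convex_on_supporting_line[OF convex] by blast
  have "ereal (n / M) * fext f c + ereal (s * (sum p S - r))
      \<le> (\<Sum>x\<in>S. ereal (1 / M) * fext f (M * p x))"
    if card: "card S = n" and nonneg: "\<And>x. x \<in> S \<Longrightarrow> 0 \<le> p x" for S p
  proof -
    have "ereal (n / M) * fext f c + ereal (s * (sum p S - r))
        = ereal (n * ((f c - s * c) / M) + s * sum p S)"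
    proof -
      have "n / M * f c + s * (sum p S - r) = n * ((f c - s * c) / M) + s * sum p S"
        using \<open>0 < n\<close> \<open>0 < M\<close> unfolding c_def by (simp add: field_simps)
      moreover have "fext f c = ereal (f c)" using \<open>0 < c\<close> by (simp add: fext_def)
      ultimately show ?thesis by (simp only: times_ereal.simps(1) plus_ereal.simps(1))
    qed
    also have "\<dots> = (\<Sum>x\<in>S. ereal ((f c - s * c) / M + s * p x))"
      using card by (simp add: sum.distrib sum_distrib_left)
    also have "\<dots> \<le> (\<Sum>x\<in>S. ereal (1 / M) * fext f (M * p x))"
    proof (rule sum_mono)
      fix x assume "x \<in> S"
      have "ereal (f c + s * (M * p x - c)) \<le> fext f (M * p x)"
        using fext_ge_supporting_line[OF convex line] nonneg[OF \<open>x \<in> S\<close>] \<open>0 < M\<close> by simp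
      then have "ereal (1 / M) * ereal (f c + s * (M * p x - c)) \<le> ereal (1 / M) * fext f (M * p x)"
        by (rule ereal_mult_left_mono) (use \<open>0 < M\<close> in simp)
      then show "ereal ((f c - s * c) / M + s * p x) \<le> ereal (1 / M) * fext f (M * p x)"
        using \<open>0 < M\<close> by (simp add: field_simps)
    qed
    finally show ?thesis .
  qed
  then show thesis unfolding c_def by (rule that)
qed

lemma measurable_measure_pmf_prob:
  fixes K :: "'b \<Rightarrow> 'a::finite pmf" and A :: "'b \<Rightarrow> 'a set"
  assumes "\<And>x. (\<lambda>y. pmf (K y) x) \<in> borel_measurable N"
    and "\<And>x. {y \<in> space N. x \<in> A y} \<in> sets N"
  shows "(\<lambda>y. measure_pmf.prob (K y) (A y)) \<in> borel_measurable N"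
proof -
  have eq: "measure_pmf.prob (K y) (A y)
      = (\<Sum>x\<in>UNIV. pmf (K y) x * indicator {y \<in> space N. x \<in> A y} y)" if "y \<in> space N" for y
  proof -
    have "measure_pmf.prob (K y) (A y) = (\<Sum>x\<in>UNIV. if x \<in> A y then pmf (K y) x else 0)"
      by (simp add: measure_measure_pmf_finite sum.If_cases Int_def)
    also have "\<dots> = (\<Sum>x\<in>UNIV. pmf (K y) x * indicator {y \<in> space N. x \<in> A y} y)"
      using that by (intro sum.cong) (auto simp: indicator_def)
    finally show ?thesis .
  qed
  have "(\<lambda>y. \<Sum>x\<in>UNIV. pmf (K y) x * indicator {y \<in> space N. x \<in> A y} y) \<in> borel_measurable N"
    by (intro borel_measurable_sum borel_measurable_times borel_measurable_indicator assms)
  then show ?thesis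
    using measurable_cong[of N "\<lambda>y. measure_pmf.prob (K y) (A y)", OF eq] by blast
qed

lemma nn_integral_ge_of_AE_centered_minorant:
  fixes D :: "'a \<Rightarrow> ereal" and h :: "'a \<Rightarrow> real" and T :: ereal
  assumes "prob_space N" and h: "integrable N h" "integral\<^sup>L N h = 0"
    and minorant: "AE y in N. T + ereal (h y) \<le> D y"
  shows "T \<le> enn2ereal (\<integral>\<^sup>+ y. e2ennreal (D y) \<partial>N)"
proof (cases T)
  case (real t)
  interpret prob_space N by fact
  define H where "H y = max 0 (t + h y)" for y
  have H: "integrable N H"
    unfolding H_def using h by (intro integrable_max integrable_add) auto
  have "t = integral\<^sup>L N (\<lambda>y. t + h y)"
    using h by (simp add: prob_space)
  also have "\<dots> \<le> integral\<^sup>L N H"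
    unfolding H_def using h by (intro integral_mono integrable_max integrable_add) auto
  finally have "ereal t \<le> enn2ereal (ennreal (integral\<^sup>L N H))"
    by (simp add: H_def)
  also have "ennreal (integral\<^sup>L N H) = (\<integral>\<^sup>+ y. ennreal (H y) \<partial>N)"
    using H by (rule nn_integral_eq_integral[symmetric]) (simp add: H_def)
  also have "(\<integral>\<^sup>+ y. ennreal (H y) \<partial>N) \<le> (\<integral>\<^sup>+ y. e2ennreal (D y) \<partial>N)"
  proof (rule nn_integral_mono_AE)
    show "AE y in N. ennreal (H y) \<le> e2ennreal (D y)"
      using minorant
    proof eventually_elim
      case (elim y)
      have "ennreal (H y) = e2ennreal (ereal (t + h y))"
        by (simp add: H_def e2ennreal_ereal ennreal_max_0 max.commute)
      also have "\<dots> \<le> e2ennreal (D y)"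
        using elim real by (intro e2ennreal_mono) simp
      finally show ?case .
    qed
  qed
  finally show ?thesis using real by (simp add: less_eq_ennreal.rep_eq)
next
  case PInf
  interpret prob_space N by fact
  have "AE y in N. e2ennreal (D y) = \<infinity>"
    using minorant by eventually_elim (use PInf in simp)
  then have "(\<integral>\<^sup>+ y. e2ennreal (D y) \<partial>N) = \<infinity>"
    by (simp add: nn_integral_cong_AE emeasure_space_1)
  then show ?thesis by simp
qed simp

lemma AE_eq_bound_of_integral_eq_bound:
  fixes e :: "'a \<Rightarrow> real"
  assumes "prob_space N" and e: "integrable N e" and bounds: "\<And>y. 0 \<le> e y" "\<And>y. e y \<le> 1"
  shows "AE y in N. (integral\<^sup>L N e = 0 \<longrightarrow> e y = 0) \<and> (integral\<^sup>L N e = 1 \<longrightarrow> e y = 1)"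
proof -
  interpret prob_space N by fact
  have "integral\<^sup>L N e = 0 \<Longrightarrow> AE y in N. e y = 0"
    using integral_nonneg_eq_0_iff_AE[OF e] bounds by simp
  moreover have "integral\<^sup>L N e = 1 \<Longrightarrow> AE y in N. 1 - e y = 0"
    using integral_nonneg_eq_0_iff_AE[of N "\<lambda>y. 1 - e y"] e bounds by (simp add: prob_space)
  ultimately show ?thesis by auto
qed

lemma fdiv_unif_split:
  fixes P :: "'x::finite pmf" and A :: "'x set"
  defines "M \<equiv> real CARD('x)"
  shows "fdiv f P unif = (\<Sum>x\<in>A. ereal (1 / M) * fext f (M * pmf P x))
    + (\<Sum>x\<in>- A. ereal (1 / M) * fext f (M * pmf P x))"
proof -
  have "fdiv f P unif = (\<Sum>x\<in>A \<union> - A. ereal (1 / M) * fext f (M * pmf P x))"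
    by (simp add: fdiv_def unif_def M_def mult.commute)
  then show ?thesis
    using sum.union_disjoint[of A "- A" "\<lambda>x. ereal (1 / M) * fext f (M * pmf P x)"] by simp
qed

lemma fdiv_unif_ge_affine_in_list_error:
  fixes f :: "real \<Rightarrow> real" and L :: nat and r :: real
  defines "M \<equiv> real CARD('x::finite)"
  assumes convex: "convex_on {0<..} f" and "0 < L" "L < CARD('x)" "0 \<le> r" "r \<le> 1"
  obtains B where "\<And>(P :: 'x pmf) A. card A = L \<Longrightarrow>
      (r = 0 \<Longrightarrow> measure_pmf.prob P (- A) = 0) \<Longrightarrow> (r = 1 \<Longrightarrow> measure_pmf.prob P (- A) = 1) \<Longrightarrow>
      ereal (real L / M) * fext f (M * (1 - r) / real L)
        + ereal (1 - real L / M) * fext f (M * r / (M - real L))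
        + ereal (B * (measure_pmf.prob P (- A) - r))
      \<le> fdiv f P unif"
proof -
  have "0 < M" using assms(3,4) by (simp add: M_def)
  have card_compl: "real (CARD('x) - L) = M - real L"
    using \<open>L < CARD('x)\<close> by (simp add: M_def of_nat_diff)
  obtain sa where sa: "\<And>(S :: 'x set) p. card S = L \<Longrightarrow> (\<And>x. x \<in> S \<Longrightarrow> 0 \<le> p x) \<Longrightarrow>
      (1 - r = 0 \<Longrightarrow> sum p S = 0) \<Longrightarrow>
      ereal (L / M) * fext f (M * (1 - r) / L) + ereal (sa * (sum p S - (1 - r)))
        \<le> (\<Sum>x\<in>S. ereal (1 / M) * fext f (M * p x))"
    using sum_fext_ge_supporting_line[OF convex \<open>0 < L\<close> \<open>0 < M\<close>, of "1 - r"] \<open>r \<le> 1\<close> by auto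
  obtain sb where sb: "\<And>(S :: 'x set) p. card S = CARD('x) - L \<Longrightarrow> (\<And>x. x \<in> S \<Longrightarrow> 0 \<le> p x) \<Longrightarrow>
      (r = 0 \<Longrightarrow> sum p S = 0) \<Longrightarrow>
      ereal ((M - L) / M) * fext f (M * r / (M - L)) + ereal (sb * (sum p S - r))
        \<le> (\<Sum>x\<in>S. ereal (1 / M) * fext f (M * p x))"
    using sum_fext_ge_supporting_line[OF convex _ \<open>0 < M\<close> \<open>0 \<le> r\<close>, of "CARD('x) - L"]
      \<open>L < CARD('x)\<close> card_compl by auto
  show thesis
  proof (rule that[of "sb - sa"])
    fix P :: "'x pmf" and A :: "'x set"
    assume "card A = L" and r0: "r = 0 \<Longrightarrow> measure_pmf.prob P (- A) = 0"
      and r1: "r = 1 \<Longrightarrow> measure_pmf.prob P (- A) = 1"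
    define e where "e = measure_pmf.prob P (- A)"
    have mass_compl: "sum (pmf P) (- A) = e"
      by (simp add: e_def measure_measure_pmf_finite)
    have mass: "sum (pmf P) A = 1 - e"
      using measure_pmf.prob_compl[of A P]
      by (simp add: e_def measure_measure_pmf_finite Compl_eq_Diff_UNIV)
    have "card (- A) = CARD('x) - L"
      using \<open>card A = L\<close> card_Diff_subset[of A UNIV] by (simp add: Compl_eq_Diff_UNIV)
    have part_A: "ereal (L / M) * fext f (M * (1 - r) / L) + ereal (sa * (r - e))
        \<le> (\<Sum>x\<in>A. ereal (1 / M) * fext f (M * pmf P x))"
      using sa[OF \<open>card A = L\<close>, of "pmf P"] mass r1 by (simp add: e_def algebra_simps)
    have "(M - L) / M = 1 - L / M" using \<open>0 < M\<close> by (simp add: field_simps)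
    then have part_compl: "ereal (1 - L / M) * fext f (M * r / (M - L)) + ereal (sb * (e - r))
        \<le> (\<Sum>x\<in>- A. ereal (1 / M) * fext f (M * pmf P x))"
      using sb[OF \<open>card (- A) = CARD('x) - L\<close>, of "pmf P"] mass_compl r0 by (simp add: e_def)
    have "ereal ((sb - sa) * (e - r)) = ereal (sa * (r - e)) + ereal (sb * (e - r))"
      by (simp add: algebra_simps)
    then have "ereal (real L / M) * fext f (M * (1 - r) / real L)
        + ereal (1 - real L / M) * fext f (M * r / (M - real L)) + ereal ((sb - sa) * (e - r))
      = (ereal (L / M) * fext f (M * (1 - r) / L) + ereal (sa * (r - e)))
        + (ereal (1 - L / M) * fext f (M * r / (M - L)) + ereal (sb * (e - r)))"
      by (simp only: ac_simps)
    also have "\<dots> \<le> fdiv f P unif"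
      unfolding fdiv_unif_split[of f P A] M_def[symmetric] by (rule add_mono[OF part_A part_compl])
    finally show "ereal (real L / M) * fext f (M * (1 - r) / real L)
        + ereal (1 - real L / M) * fext f (M * r / (M - real L))
        + ereal ((sb - sa) * (measure_pmf.prob P (- A) - r)) \<le> fdiv f P unif"
      by (simp only: e_def)
  qed
qed

theorem theorem11:
  fixes PY :: "'y measure" and K :: "'y \<Rightarrow> 'x::finite pmf"
    and Lst :: "'y \<Rightarrow> 'x set" and L :: nat and f :: "real \<Rightarrow> real"
  assumes "prob_space PY"
    and "\<And>x. (\<lambda>y. pmf (K y) x) \<in> borel_measurable PY"
    and "0 < L" and "L < CARD('x)"
    and "\<And>y. y \<in> space PY \<Longrightarrow> card (Lst y) = L"
    and "\<And>x. {y \<in> space PY. x \<in> Lst y} \<in> sets PY"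
    and "convex_on {0<..} f" and "f 1 = 0"
  defines "M \<equiv> real CARD('x)"
    and "PL \<equiv> (\<integral>y. measure_pmf.prob (K y) (- Lst y) \<partial>PY)"
  shows "enn2ereal (\<integral>\<^sup>+ y. e2ennreal (fdiv f (K y) unif) \<partial>PY)
           \<ge> ereal (real L / M) * fext f (M * (1 - PL) / real L)
             + ereal (1 - real L / M) * fext f (M * PL / (M - real L))"
proof -
  interpret prob_space PY by fact
  define e where "e y = measure_pmf.prob (K y) (- Lst y)" for y
  have "{y \<in> space PY. x \<in> - Lst y} = space PY - {y \<in> space PY. x \<in> Lst y}" for x
    by auto
  then have "e \<in> borel_measurable PY"
    unfolding e_def using assms(2,6) by (intro measurable_measure_pmf_prob) auto
  then have e: "integrable PY e"
    by (intro integrable_const_bound[where B = 1]) (auto simp: e_def)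
  have PL: "PL = integral\<^sup>L PY e"
    unfolding PL_def e_def ..
  have "0 \<le> PL" "PL \<le> 1"
    unfolding PL using e by (auto intro!: integral_nonneg integral_le_const simp: e_def)
  then obtain B where B: "\<And>(P :: 'x pmf) A. card A = L \<Longrightarrow>
      (PL = 0 \<Longrightarrow> measure_pmf.prob P (- A) = 0) \<Longrightarrow> (PL = 1 \<Longrightarrow> measure_pmf.prob P (- A) = 1) \<Longrightarrow>
      ereal (real L / M) * fext f (M * (1 - PL) / real L)
        + ereal (1 - real L / M) * fext f (M * PL / (M - real L))
        + ereal (B * (measure_pmf.prob P (- A) - PL)) \<le> fdiv f P unif"
    using fdiv_unif_ge_affine_in_list_error[OF assms(7,3,4)] unfolding M_def by blast
  have "AE y in PY. (PL = 0 \<longrightarrow> e y = 0) \<and> (PL = 1 \<longrightarrow> e y = 1)"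
    unfolding PL by (rule AE_eq_bound_of_integral_eq_bound[OF assms(1) e]) (simp_all add: e_def)
  then have "AE y in PY. ereal (real L / M) * fext f (M * (1 - PL) / real L)
        + ereal (1 - real L / M) * fext f (M * PL / (M - real L))
        + ereal (B * (e y - PL)) \<le> fdiv f (K y) unif"
    using AE_space by eventually_elim (use B assms(5) in \<open>auto simp: e_def\<close>)
  moreover have "integral\<^sup>L PY (\<lambda>y. B * (e y - PL)) = 0"
    using e by (simp add: PL prob_space)
  ultimately show ?thesis
    using nn_integral_ge_of_AE_centered_minorant[OF assms(1), of "\<lambda>y. B * (e y - PL)"] e by simp
qed
end
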